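(* Let $t>0$. For every integer $m\geq1$ and every $y\in\mathbb{C}$ with $|y|<1$, the series below converges and $$2^{m+1}\sum_{j\geq m+1}L_{j-m-1}^{(m+1)}(2jt)\,(e^{-t}y)^j=\frac{(K_{2t}(y))^2-1}{t(K_{2t}(y))^2+(2-t)}\,\big[K_{2t}(y)-1\big]^m.$$
   Context: Pochhammer symbol $(a)_0=1$, $(a)_k=a(a+1)\cdots(a+k-1)$. Laguerre polynomials: $L_n^{(a)}(x):=\frac{1}{n!}\sum_{j=0}^n\frac{(-n)_j}{j!}(a+j+1)_{n-j}x^j$. For $t>0$, $\xi_{2t}(Z):=\frac{Z-1}{Z+1}e^{tZ}$. The function $K_{2t}$ on the open unit disc $\mathbb{D}$ is the Herglotz transform $K_{2t}(y)=\int_{\mathbb{T}}\frac{w+y}{w-y}\eta_{2t}(dw)$ of the spectral distribution $\eta_{2t}$ of the free unitary Brownian motion at time $2t$; it is known (Biane) that $K_{2t}(y)=1+2\sum_{n\ge1}\frac1n e^{-nt}L^{(1)}_{n-1}(2nt)y^n$, that $K_{2t}$ extends continuously to $\overline{\mathbb{D}}$, and that $K_{2t}$ is the compositional inverse of the restriction of $\xi_{2t}$ to the Jordan domain $\Gamma_{2t}=\{Z:\Re Z>0,\ \xi_{2t}(Z)\in\mathbb{D}\}$ (component containing $1$), which $\xi_{2t}$ maps bijectively onto $\mathbb{D}$; in particular $\xi_{2t}(K_{2t}(y))=y$, $\Re K_{2t}(y)>0$, $K_{2t}(0)=1$. *)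

theory Defs
  imports "HOL-Analysis.Analysis"
begin

definition laguerre :: "nat \<Rightarrow> real \<Rightarrow> real \<Rightarrow> real" where
  "laguerre n a x =
     (1 / fact n) * (\<Sum>j=0..n. pochhammer (- real n) j / fact j
                                * pochhammer (a + real j + 1) (n - j) * x ^ j)"

text \<open>K_{2t}(y) = 1 + 2 sum_{n>=1} (1/n) e^{-nt} L^(1)_{n-1}(2nt) y^n
  (Biane's power series for the Herglotz transform of the free unitary
  Brownian motion distribution at time 2t), for |y| < 1.\<close>
definition K2t :: "real \<Rightarrow> complex \<Rightarrow> complex" where
  "K2t t y = 1 + 2 * (\<Sum>n. if n = 0 then 0 else
       of_real (1 / real n * exp (- real n * t) * laguerre (n - 1) 1 (2 * real n * t)) * y ^ n)"

end

theory Submission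
  imports Defs "HOL-Complex_Analysis.Complex_Analysis"
begin

text \<open>
  Let phi(W) = (W + 2) exp(-tW). Since xi_2t(1 + W) = e^t W / phi(W), one expects
  K_2t(y) = 1 + A(e^-t y), where A is the power series solving A = X phi(A).
  Lagrange-Buermann inversion, proved with residues of formal Laurent series, gives
  [X^j] H(A) A' / phi(A) = [X^j] H phi^j. For H = X^k this is [X^(j-k)] phi^j = 2^k L^(k)_(j-k)(2jt);
  for H = phi it shows that the coefficients of A are those of Biane's series for K_2t - 1.
  Hence the left-hand side
  is A^(m+1) A' / phi(A) evaluated at e^-t y. Differentiating A = X phi(A) gives
  A' (2 + t A (A + 2)) = (A + 2) phi(A), which turns this into A^(m+1) (A + 2) / (2 + t A (A + 2)),
  the right-hand side with K = 1 + A. Convergence for |y| < 1 comes from the Cauchy estimate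
  |L^(a)_n(x)| <= e^(x/2) (1 - r)^(-a-1) r^-n for the generating function
  (1 - z)^(-a-1) exp(-x z / (1 - z)), using Re (z / (1 - z)) >= -1/2 on the unit disc.
\<close>

section \<open>Lagrange-Buermann inversion through formal residues\<close>

lemma fps_const_plus_fps_X_times_shift:
  fixes f :: "'a::comm_ring_1 fps"
  shows "f = fps_const (fps_nth f 0) + fps_X * fps_shift 1 f"
  by (rule fps_ext) (auto simp: fps_X_mult_nth)

lemma fls_residue_inverse_power_times_deriv:
  fixes f :: "'a::field_char_0 fls"
  assumes "n \<ge> 2"
  shows "fls_residue (inverse f ^ n * fls_deriv f) = 0"
proof -
  have "fls_deriv (inverse f ^ (n - 1)) = of_nat (n - 1) * inverse f ^ (n - 2) * fls_deriv (inverse f)"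
    using assms by (simp add: fls_deriv_power numeral_2_eq_2)
  also have "\<dots> = - of_nat (n - 1) * (inverse f ^ Suc (Suc (n - 2)) * fls_deriv f)"
    by (simp add: fls_inverse_deriv_divring algebra_simps)
  also have "Suc (Suc (n - 2)) = n"
    using assms by simp
  finally have "of_nat (n - 1) * fls_residue (inverse f ^ n * fls_deriv f) = 0"
    using fls_residue_deriv[of "inverse f ^ (n - 1)"]
    by (simp add: fls_of_nat flip: fls_residue_fls_const_times)
  with assms show ?thesis
    by simp
qed

lemma fls_residue_inverse_power_times_deriv_fps:
  fixes A :: "'a::field_char_0 fps"
  assumes "fps_nth A 0 = 0" "fps_nth A 1 \<noteq> 0"
  shows "fls_residue (inverse (fps_to_fls A) ^ Suc n * fls_deriv (fps_to_fls A)) = (if n = 0 then 1 else 0)"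
proof (cases n)
  case 0
  have "subdegree A = 1"
    using assms by (intro subdegreeI) auto
  with 0 show ?thesis
    using fls_residue_deriv_times_inverse_eq_subdegree(2)[of "fps_to_fls A"]
    by (simp add: fls_subdegree_fls_to_fps)
next
  case Suc
  then show ?thesis
    using fls_residue_inverse_power_times_deriv[of "Suc n" "fps_to_fls A"] by simp
qed

lemma fls_residue_fps_compose:
  fixes A P :: "'a::field_char_0 fps"
  assumes A: "fps_nth A 0 = 0" "fps_nth A 1 \<noteq> 0"
  shows "fls_residue (fps_to_fls (P oo A) * inverse (fps_to_fls A) ^ Suc n * fls_deriv (fps_to_fls A)) = fps_nth P n"
proof (induction n arbitrary: P)
  define \<alpha> where "\<alpha> = fps_to_fls A"
  have "\<alpha> \<noteq> 0"
    using A by (auto simp: \<alpha>_def)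
  have split: "fps_to_fls (P oo A) * inverse \<alpha> ^ Suc n * fls_deriv \<alpha> =
      fls_const (fps_nth P 0) * (inverse \<alpha> ^ Suc n * fls_deriv \<alpha>) +
      fps_to_fls (fps_shift 1 P oo A) * inverse \<alpha> ^ n * fls_deriv \<alpha>" for P n
  proof -
    have "P oo A = fps_const (fps_nth P 0) + A * (fps_shift 1 P oo A)"
      by (subst fps_const_plus_fps_X_times_shift)
        (simp add: fps_compose_add_distrib fps_const_compose fps_compose_mult_distrib A
          fps_X_fps_compose_startby0)
    then have "fps_to_fls (P oo A) = fls_const (fps_nth P 0) + \<alpha> * fps_to_fls (fps_shift 1 P oo A)"
      by (simp add: \<alpha>_def fps_to_fls_plus fls_times_fps_to_fls)
    then have "fps_to_fls (P oo A) * inverse \<alpha> ^ Suc n * fls_deriv \<alpha> =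
      fls_const (fps_nth P 0) * (inverse \<alpha> ^ Suc n * fls_deriv \<alpha>) +
      fps_to_fls (fps_shift 1 P oo A) * (\<alpha> * inverse \<alpha> ^ Suc n) * fls_deriv \<alpha>"
      by (simp only: algebra_simps)
    also have "\<alpha> * inverse \<alpha> ^ Suc n = inverse \<alpha> ^ n"
      using \<open>\<alpha> \<noteq> 0\<close> by (simp add: mult.assoc[symmetric])
    finally show ?thesis .
  qed
  {
    case 0
    show ?case
      using split[of P 0] fls_residue_inverse_power_times_deriv_fps[OF A, of 0]
      by (simp add: \<alpha>_def fls_deriv_fps_to_fls flip: fls_times_fps_to_fls del: power_Suc)
  next
    case (Suc n)
    show ?case
      using split[of P "Suc n"] Suc[of "fps_shift 1 P"] fls_residue_inverse_power_times_deriv_fps[OF A, of "Suc n"]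
      by (simp add: \<alpha>_def del: power_Suc)
  }
qed

lemma fps_nth_eq_fls_residue:
  fixes F :: "'a::field fps"
  shows "fps_nth F n = fls_residue (inverse (fls_X ^ Suc n) * fps_to_fls F)"
proof -
  have "inverse (fls_X ^ Suc n) = inverse (fls_X_intpow (int (Suc n)) :: 'a fls)"
    by (simp only: fls_X_power_conv_shift_1)
  also have "\<dots> = fls_X_intpow (- int (Suc n))"
    by (rule fls_inverse_X_intpow)
  finally show ?thesis
    using fls_residue_shift_nth[of "fps_to_fls F" "int n"] by (simp add: add.commute)
qed

definition lagrange_inverse :: "'a::field fps \<Rightarrow> 'a fps" where
  "lagrange_inverse \<phi> = fps_inv (fps_X * inverse \<phi>)"

lemma lagrange_inverse_nth_0 [simp]: "fps_nth (lagrange_inverse \<phi>) 0 = 0"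
  by (simp add: lagrange_inverse_def fps_inv_def)

lemma lagrange_inverse_eq:
  fixes \<phi> :: "'a::field fps"
  assumes "fps_nth \<phi> 0 \<noteq> 0"
  shows "lagrange_inverse \<phi> = fps_X * (\<phi> oo lagrange_inverse \<phi>)"
proof -
  define A where "A = lagrange_inverse \<phi>"
  have "fps_nth (\<phi> oo A) 0 \<noteq> 0"
    using assms by simp
  have "(fps_X * inverse \<phi>) oo A = fps_X"
    unfolding A_def lagrange_inverse_def using assms by (intro fps_inv_right) simp_all
  then have "A * inverse (\<phi> oo A) = fps_X"
    using assms by (simp add: A_def fps_compose_mult_distrib fps_X_fps_compose_startby0 fps_inverse_compose)
  then have "A * (inverse (\<phi> oo A) * (\<phi> oo A)) = fps_X * (\<phi> oo A)"
    by (simp add: mult.assoc)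
  also have "inverse (\<phi> oo A) * (\<phi> oo A) = 1"
    using \<open>fps_nth (\<phi> oo A) 0 \<noteq> 0\<close> by (rule inverse_mult_eq_1)
  finally show ?thesis
    by (simp add: A_def)
qed

lemma lagrange_inverse_nth_1:
  fixes \<phi> :: "'a::field fps"
  assumes "fps_nth \<phi> 0 \<noteq> 0"
  shows "fps_nth (lagrange_inverse \<phi>) 1 = fps_nth \<phi> 0"
  using assms by (subst lagrange_inverse_eq) simp_all

theorem lagrange_buermann_nth:
  fixes \<phi> H :: "'a::field_char_0 fps"
  assumes \<phi>0: "fps_nth \<phi> 0 \<noteq> 0"
  defines "A \<equiv> lagrange_inverse \<phi>"
  shows "fps_nth ((H oo A) * fps_deriv A * inverse (\<phi> oo A)) n = fps_nth (H * \<phi> ^ n) n"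
proof -
  define \<alpha> where "\<alpha> = fps_to_fls A"
  define \<Phi> where "\<Phi> = fps_to_fls (\<phi> oo A)"
  have A1: "fps_nth A 1 \<noteq> 0"
    using \<phi>0 lagrange_inverse_nth_1[OF \<phi>0] by (simp add: A_def)
  have "\<Phi> \<noteq> 0"
    using \<phi>0 by (auto simp: \<Phi>_def dest: arg_cong[of _ _ "\<lambda>F. fps_nth F 0"])
  \<comment> \<open>In the Laurent field \<open>X = A / \<phi>(A)\<close>, so coefficient extraction becomes a residue in \<open>A\<close>.\<close>
  have "\<alpha> = fls_X * \<Phi>"
    unfolding \<alpha>_def \<Phi>_def A_def
    by (subst lagrange_inverse_eq[OF \<phi>0]) (simp only: fls_times_fps_to_fls fps_X_to_fls)
  then have X: "inverse (fls_X ^ Suc n) = \<Phi> ^ Suc n * inverse \<alpha> ^ Suc n"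
    using \<open>\<Phi> \<noteq> 0\<close> by (simp add: power_mult_distrib field_simps)
  have inv: "fps_to_fls (inverse (\<phi> oo A)) = inverse \<Phi>"
    using \<phi>0 by (simp add: \<Phi>_def fls_inverse_fps_to_fls subdegree_eq_0)
  have "fps_to_fls ((H oo A) * fps_deriv A * inverse (\<phi> oo A)) =
      fps_to_fls (H oo A) * fls_deriv \<alpha> * inverse \<Phi>"
    by (simp add: fls_times_fps_to_fls inv \<alpha>_def fls_deriv_fps_to_fls)
  then have "fps_nth ((H oo A) * fps_deriv A * inverse (\<phi> oo A)) n =
      fls_residue ((\<Phi> ^ Suc n * inverse \<Phi>) * fps_to_fls (H oo A) * inverse \<alpha> ^ Suc n * fls_deriv \<alpha>)"
    by (simp only: fps_nth_eq_fls_residue X mult_ac)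
  also have "\<Phi> ^ Suc n * inverse \<Phi> = \<Phi> ^ n"
    using \<open>\<Phi> \<noteq> 0\<close> by simp
  also have "\<Phi> ^ n * fps_to_fls (H oo A) = fps_to_fls ((H * \<phi> ^ n) oo A)"
    by (simp add: \<Phi>_def A_def fps_compose_mult_distrib fps_compose_power fls_times_fps_to_fls
        flip: fps_to_fls_power)
  also have "fls_residue (fps_to_fls ((H * \<phi> ^ n) oo A) * inverse \<alpha> ^ Suc n * fls_deriv \<alpha>) =
      fps_nth (H * \<phi> ^ n) n"
    unfolding \<alpha>_def using A1 by (intro fls_residue_fps_compose) (simp_all add: A_def)
  finally show ?thesis .
qed

corollary lagrange_inverse_nth:
  fixes \<phi> :: "'a::field_char_0 fps"
  assumes "fps_nth \<phi> 0 \<noteq> 0"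
  shows "of_nat (Suc n) * fps_nth (lagrange_inverse \<phi>) (Suc n) = fps_nth (\<phi> ^ Suc n) n"
proof -
  define A where "A = lagrange_inverse \<phi>"
  have "(\<phi> oo A) * inverse (\<phi> oo A) = 1"
    using assms by (simp add: inverse_mult_eq_1')
  then have "(\<phi> oo A) * fps_deriv A * inverse (\<phi> oo A) = fps_deriv A"
    by (simp add: mult.commute mult.left_commute)
  then have "fps_nth (fps_deriv A) n = fps_nth (\<phi> ^ Suc n) n"
    using lagrange_buermann_nth[OF assms, of \<phi> n] by (simp only: A_def power_Suc)
  then show ?thesis
    by (simp add: A_def fps_deriv_nth)
qed

lemma lagrange_inverse_deriv:
  fixes \<phi> :: "'a::field_char_0 fps"
  assumes \<phi>0: "fps_nth \<phi> 0 \<noteq> 0"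
  defines "A \<equiv> lagrange_inverse \<phi>"
  shows "fps_deriv A * ((\<phi> oo A) - A * (fps_deriv \<phi> oo A)) = (\<phi> oo A)\<^sup>2"
proof -
  have A: "A = fps_X * (\<phi> oo A)"
    unfolding A_def by (rule lagrange_inverse_eq[OF \<phi>0])
  have "fps_deriv A = (\<phi> oo A) + fps_X * ((fps_deriv \<phi> oo A) * fps_deriv A)"
    by (subst A) (simp add: fps_compose_deriv A_def)
  from arg_cong[OF this, of "\<lambda>F. F * (\<phi> oo A)"]
  have "fps_deriv A * (\<phi> oo A) = (\<phi> oo A)\<^sup>2 + (fps_X * (\<phi> oo A)) * (fps_deriv \<phi> oo A) * fps_deriv A"
    by (simp add: algebra_simps power2_eq_square)
  then show ?thesis
    by (subst (asm) A[symmetric]) (simp add: algebra_simps)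
qed

section \<open>Laguerre polynomials\<close>

lemma laguerre_eq_sum_gchoose:
  "laguerre n a x = (\<Sum>j=0..n. (-1) ^ j * ((a + real n) gchoose (n - j)) * x ^ j / fact j)"
  unfolding laguerre_def sum_distrib_left
proof (rule sum.cong[OF refl])
  fix j assume "j \<in> {0..n}"
  then have j: "j \<le> n" by simp
  have "pochhammer (- real n) j = (-1) ^ j * real (n choose j) * fact j"
    by (simp add: pochhammer_minus gbinomial_pochhammer' binomial_gbinomial)
  moreover have "pochhammer (a + real j + 1) (n - j) = ((a + real n) gchoose (n - j)) * fact (n - j)"
    using j by (simp add: gbinomial_pochhammer' of_nat_diff)
  moreover have "fact j * fact (n - j) * real (n choose j) = (fact n :: real)"
    using arg_cong[OF binomial_fact_lemma[OF j], of real] by simp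
  ultimately show "1 / fact n * (pochhammer (- real n) j / fact j * pochhammer (a + real j + 1) (n - j) * x ^ j) =
      (-1) ^ j * ((a + real n) gchoose (n - j)) * x ^ j / fact j"
    by (simp add: field_simps)
qed

corollary laguerre_of_nat_eq_sum_binomial:
  "laguerre n (real a) x = (\<Sum>j=0..n. (-1) ^ j * real (a + n choose (n - j)) * x ^ j / fact j)"
  by (simp add: laguerre_eq_sum_gchoose binomial_gbinomial flip: of_nat_add)

lemma fps_compose_times_nth:
  fixes F H C :: "'a::comm_ring_1 fps"
  assumes H0: "fps_nth H 0 = 0"
  shows "fps_nth ((F oo H) * C) n = (\<Sum>i=0..n. fps_nth F i * fps_nth (H ^ i * C) n)"
proof -
  have H_power_nth: "fps_nth (H ^ i) k = 0" if "k < i" for i k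
  proof -
    have "H = fps_X * fps_shift 1 H"
      using fps_const_plus_fps_X_times_shift[of H] H0 by simp
    from arg_cong[OF this, of "\<lambda>F. F ^ i"] have "H ^ i = fps_X ^ i * fps_shift 1 H ^ i"
      by (simp add: power_mult_distrib)
    with that show ?thesis
      by (simp add: fps_X_power_mult_nth)
  qed
  have "fps_nth ((F oo H) * C) n =
      (\<Sum>k=0..n. \<Sum>i=0..n. fps_nth F i * fps_nth (H ^ i) k * fps_nth C (n - k))"
  proof (unfold fps_mult_nth fps_compose_nth, intro sum.cong refl)
    fix k assume "k \<in> {0..n}"
    then have "(\<Sum>i=0..k. fps_nth F i * fps_nth (H ^ i) k) = (\<Sum>i=0..n. fps_nth F i * fps_nth (H ^ i) k)"
      by (intro sum.mono_neutral_left) (auto simp: H_power_nth)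
    then show "(\<Sum>i=0..k. fps_nth F i * fps_nth (H ^ i) k) * fps_nth C (n - k) =
        (\<Sum>i=0..n. fps_nth F i * fps_nth (H ^ i) k * fps_nth C (n - k))"
      by (simp add: sum_distrib_right)
  qed
  also have "\<dots> = (\<Sum>i=0..n. fps_nth F i * fps_nth (H ^ i * C) n)"
    by (subst sum.swap) (simp add: fps_mult_nth sum_distrib_left mult.assoc)
  finally show ?thesis .
qed

definition laguerre_gf :: "real \<Rightarrow> nat \<Rightarrow> complex \<Rightarrow> complex" where
  "laguerre_gf x a z = exp (- of_real x * (z / (1 - z))) / (1 - z) ^ (a + 1)"

lemma has_fps_expansion_laguerre_gf:
  "laguerre_gf x a has_fps_expansion Abs_fps (\<lambda>n. of_real (laguerre n (real a) x))"
proof -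
  define H :: "complex fps" where "H = fps_X * inverse (1 - fps_X)"
  define C :: "complex fps" where "C = inverse ((1 - fps_X) ^ (a + 1))"
  have "(\<lambda>z. z / (1 - z)) has_fps_expansion H"
    unfolding H_def by (subst fps_divide_unit[symmetric]) (auto intro!: fps_expansion_intros)
  then have "((\<lambda>w. exp (- of_real x * w)) \<circ> (\<lambda>z. z / (1 - z))) has_fps_expansion (fps_exp (- of_real x) oo H)"
    by (intro fps_expansion_intros) (simp_all add: H_def)
  moreover have "(\<lambda>z. inverse ((1 - z) ^ (a + 1))) has_fps_expansion C"
    unfolding C_def
    by (intro has_fps_expansion_inverse has_fps_expansion_power has_fps_expansion_diff
        has_fps_expansion_1 has_fps_expansion_fps_X) simp
  ultimately have "laguerre_gf x a has_fps_expansion (fps_exp (- of_real x) oo H) * C"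
    unfolding laguerre_gf_def[abs_def] divide_inverse using has_fps_expansion_mult by (fastforce simp: o_def)
  also have "(fps_exp (- of_real x) oo H) * C = Abs_fps (\<lambda>n. of_real (laguerre n (real a) x))"
  proof (rule fps_ext)
    fix n
    have HC: "fps_nth (H ^ i * C) n = (if i \<le> n then of_nat (a + n choose (n - i)) else 0)" for i
    proof -
      have "H ^ i * C = fps_X ^ i * inverse ((1 - fps_X) ^ (a + 1 + i))"
        by (simp add: H_def C_def power_mult_distrib fps_inverse_power fps_inverse_mult power_add mult_ac)
      moreover have "fps_nth (inverse ((1 - fps_X) ^ (a + 1 + i)) :: complex fps) (n - i) = of_nat (a + n choose (n - i))"
        if "i \<le> n"
        using one_minus_const_fps_X_neg_power'[of "a + 1 + i" "1::complex"] that by simp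
      ultimately show ?thesis
        by (simp add: fps_X_power_mult_nth)
    qed
    have "fps_nth ((fps_exp (- of_real x) oo H) * C) n =
        (\<Sum>i=0..n. fps_nth (fps_exp (- of_real x)) i * fps_nth (H ^ i * C) n)"
      by (rule fps_compose_times_nth) (simp add: H_def)
    also have "\<dots> = (\<Sum>i=0..n. of_real ((-1) ^ i * real (a + n choose (n - i)) * x ^ i / fact i))"
      by (intro sum.cong refl) (simp add: HC fps_exp_nth power_minus')
    finally show "fps_nth ((fps_exp (- of_real x) oo H) * C) n = fps_nth (Abs_fps (\<lambda>n. of_real (laguerre n (real a) x))) n"
      by (simp add: laguerre_of_nat_eq_sum_binomial)
  qed
  finally show ?thesis .
qed

lemma Re_divide_one_minus_ge:
  fixes z :: complex
  assumes "norm z < 1"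
  shows "Re (z / (1 - z)) \<ge> - 1 / 2"
proof -
  obtain a b where z: "z = Complex a b"
    by (cases z)
  have "a\<^sup>2 + b\<^sup>2 < 1"
    using assms by (simp add: z cmod_def)
  have "Re (z / (1 - z)) = (a - a\<^sup>2 - b\<^sup>2) / ((1 - a)\<^sup>2 + b\<^sup>2)"
    by (simp add: z Re_divide cmod_def power2_eq_square algebra_simps)
  also have "\<dots> \<ge> - 1 / 2"
  proof -
    have "a\<^sup>2 < 1"
      using \<open>a\<^sup>2 + b\<^sup>2 < 1\<close> zero_le_power2[of b] by linarith
    then have "a \<noteq> 1"
      by auto
    then have "0 < (1 - a)\<^sup>2 + b\<^sup>2"
      by (simp add: add_pos_nonneg)
    then have "(a - a\<^sup>2 - b\<^sup>2) / ((1 - a)\<^sup>2 + b\<^sup>2) + 1 / 2 =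
        (1 - (a\<^sup>2 + b\<^sup>2)) / (2 * ((1 - a)\<^sup>2 + b\<^sup>2))"
      by (simp add: field_simps power2_eq_square)
    also have "\<dots> \<ge> 0"
      using \<open>a\<^sup>2 + b\<^sup>2 < 1\<close> \<open>0 < (1 - a)\<^sup>2 + b\<^sup>2\<close> by simp
    finally show ?thesis
      by simp
  qed
  finally show ?thesis .
qed

lemma norm_laguerre_gf_le:
  assumes "norm z < 1" "x \<ge> 0"
  shows "norm (laguerre_gf x a z) \<le> exp (x / 2) / (1 - norm z) ^ (a + 1)"
proof -
  have "norm (exp (- of_real x * w)) = exp (- x * Re w)" for w
    by (simp add: norm_exp_eq_Re)
  then have "norm (exp (- of_real x * (z / (1 - z)))) = exp (- x * Re (z / (1 - z)))" .
  also have "\<dots> \<le> exp (x / 2)"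
    unfolding exp_le_cancel_iff
    using mult_left_mono[OF Re_divide_one_minus_ge[OF assms(1)] assms(2)] by linarith
  finally have "norm (exp (- of_real x * (z / (1 - z)))) \<le> exp (x / 2)" .
  moreover have "(1 - norm z) ^ (a + 1) \<le> norm ((1 - z) ^ (a + 1))"
    unfolding norm_power using assms(1) norm_triangle_ineq2[of 1 z] by (intro power_mono) auto
  moreover have "0 < (1 - norm z) ^ (a + 1)"
    using assms by simp
  ultimately show ?thesis
    unfolding laguerre_gf_def norm_divide by (intro frac_le) auto
qed

lemma abs_laguerre_le:
  assumes "x \<ge> 0" "0 < r" "r < 1"
  shows "\<bar>laguerre n (real a) x\<bar> \<le> exp (x / 2) / (1 - r) ^ (a + 1) / r ^ n"
proof -
  have holo: "laguerre_gf x a holomorphic_on ball 0 1"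
    unfolding laguerre_gf_def[abs_def] by (intro holomorphic_intros) (auto simp: dist_norm)
  have "norm ((deriv ^^ n) (laguerre_gf x a) 0) \<le> fact n * (exp (x / 2) / (1 - r) ^ (a + 1)) / r ^ n"
  proof (rule Cauchy_inequality)
    show "laguerre_gf x a holomorphic_on ball 0 r"
      using holo by (rule holomorphic_on_subset) (use assms in auto)
    show "continuous_on (cball 0 r) (laguerre_gf x a)"
      using holo by (intro holomorphic_on_imp_continuous_on holomorphic_on_subset[OF holo]) (use assms in auto)
    show "norm (laguerre_gf x a w) \<le> exp (x / 2) / (1 - r) ^ (a + 1)" if "norm (0 - w) = r" for w
      using norm_laguerre_gf_le[of w x a] that assms by simp
  qed fact
  then have "norm ((deriv ^^ n) (laguerre_gf x a) 0) / fact n \<le> exp (x / 2) / (1 - r) ^ (a + 1) / r ^ n"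
    using divide_right_mono[of _ _ "fact n"] by fastforce
  moreover have "\<bar>laguerre n (real a) x\<bar> = norm ((deriv ^^ n) (laguerre_gf x a) 0) / fact n"
    using arg_cong[OF fps_nth_fps_expansion[OF has_fps_expansion_laguerre_gf[of x a], of n], of norm]
    by (simp add: norm_divide)
  ultimately show ?thesis
    by simp
qed

lemma summable_abs_laguerre:
  assumes "t \<ge> 0" "0 \<le> \<rho>" "\<rho> < 1"
  shows "summable (\<lambda>j. \<bar>laguerre (j - k) (real k) (2 * real j * t)\<bar> * (exp (- t) * \<rho>) ^ j)"
proof -
  define r where "r = (1 + \<rho>) / 2"
  have r: "0 < r" "r < 1" "\<rho> < r"
    using assms by (auto simp: r_def)
  define C where "C = r ^ k / (1 - r) ^ (k + 1)"
  show ?thesis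
  proof (rule summable_comparison_test')
    show "summable (\<lambda>j. C * (\<rho> / r) ^ j)"
      using r assms by (intro summable_mult summable_geometric) auto
  next
    fix j assume "j \<ge> k"
    have "\<bar>laguerre (j - k) (real k) (2 * real j * t)\<bar> \<le> exp (real j * t) / (1 - r) ^ (k + 1) / r ^ (j - k)"
      using abs_laguerre_le[of "2 * real j * t" r "j - k" k] assms r by simp
    also have "\<dots> = C * exp (real j * t) / r ^ j"
      using \<open>j \<ge> k\<close> r by (simp add: C_def power_diff field_simps)
    finally have "\<bar>laguerre (j - k) (real k) (2 * real j * t)\<bar> * (exp (- t) * \<rho>) ^ j \<le>
        C * exp (real j * t) / r ^ j * (exp (- t) * \<rho>) ^ j"
      using assms by (intro mult_right_mono) auto
    also have "\<dots> = C * (\<rho> / r) ^ j"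
      by (simp add: power_mult_distrib power_divide exp_of_nat_mult[symmetric] exp_minus field_simps)
    finally show "norm (\<bar>laguerre (j - k) (real k) (2 * real j * t)\<bar> * (exp (- t) * \<rho>) ^ j) \<le> C * (\<rho> / r) ^ j"
      using assms by simp
  qed
qed

section \<open>The Lagrange inverse of \<open>(X + 2) exp(-tX)\<close>\<close>

lemma fps_X_plus_2_power_nth:
  fixes n i :: nat
  assumes "i \<le> n"
  shows "fps_nth ((fps_X + 2 :: 'a::field fps) ^ n) i = of_nat (n choose i) * 2 ^ (n - i)"
proof -
  have "(fps_X + 2 :: 'a fps) ^ n = fps_of_poly ([:2, 1:] ^ n)"
    by (simp add: fps_of_poly_power fps_of_poly_linear numeral_fps_const)
  then show ?thesis
    unfolding \<open>_ = fps_of_poly ([:2, 1:] ^ n)\<close> fps_of_poly_nth coeff_linear_poly_power[OF assms] by simp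
qed

definition xi_phi :: "real \<Rightarrow> complex fps" where
  "xi_phi t = (fps_X + 2) * fps_exp (- of_real t)"

lemma xi_phi_nth_0 [simp]: "fps_nth (xi_phi t) 0 = 2"
  by (simp add: xi_phi_def)

lemma xi_phi_power_nth:
  assumes "k \<le> n"
  shows "fps_nth (xi_phi t ^ n) k = of_real (2 ^ (n - k) * laguerre k (real (n - k)) (2 * real n * t))"
proof -
  have "xi_phi t ^ n = (fps_X + 2) ^ n * fps_exp (of_nat n * - of_real t)"
    by (simp add: xi_phi_def power_mult_distrib fps_exp_power_mult)
  then have "fps_nth (xi_phi t ^ n) k =
      (\<Sum>i=0..k. of_nat (n choose i) * 2 ^ (n - i) * ((of_nat n * - of_real t) ^ (k - i) / fact (k - i)))"
    using assms by (simp add: fps_mult_nth fps_X_plus_2_power_nth fps_exp_nth)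
  also have "\<dots> = (\<Sum>j=0..k. of_nat (n choose (k - j)) * 2 ^ (n - (k - j)) * ((of_nat n * - of_real t) ^ j / fact j))"
    by (subst sum.atLeastAtMost_rev) (intro sum.cong refl, simp)
  also have "\<dots> = of_real (\<Sum>j=0..k. 2 ^ (n - k) * ((-1) ^ j * real (n - k + k choose (k - j)) * (2 * real n * t) ^ j / fact j))"
    unfolding of_real_sum
  proof (intro sum.cong refl)
    fix j assume "j \<in> {0..k}"
    then have "(2::complex) ^ (n - (k - j)) = 2 ^ (n - k) * 2 ^ j"
      using assms by (simp flip: power_add)
    then show "of_nat (n choose (k - j)) * 2 ^ (n - (k - j)) * ((of_nat n * - of_real t) ^ j / fact j) =
        complex_of_real (2 ^ (n - k) * ((-1) ^ j * real (n - k + k choose (k - j)) * (2 * real n * t) ^ j / fact j))"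
      using assms by (simp add: power_mult_distrib power_minus' mult_ac)
  qed
  also have "\<dots> = of_real (2 ^ (n - k) * laguerre k (real (n - k)) (2 * real n * t))"
    by (simp add: laguerre_of_nat_eq_sum_binomial sum_distrib_left)
  finally show ?thesis .
qed

lemma lagrange_inverse_xi_phi_nth:
  "fps_nth (lagrange_inverse (xi_phi t)) (Suc n) = of_real (2 / real (Suc n) * laguerre n 1 (2 * real (Suc n) * t))"
proof -
  have "of_nat (Suc n) * fps_nth (lagrange_inverse (xi_phi t)) (Suc n) =
      of_real (2 * laguerre n 1 (2 * real (Suc n) * t))"
    using lagrange_inverse_nth[of "xi_phi t" n] xi_phi_power_nth[of n "Suc n" t] by simp
  then show ?thesis
    by (simp add: field_simps del: of_nat_Suc)
qed

lemma lagrange_buermann_xi_phi_nth: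
  fixes t :: real
  defines "A \<equiv> lagrange_inverse (xi_phi t)"
  shows "fps_nth (A ^ k * fps_deriv A * inverse (xi_phi t oo A)) j =
    (if k \<le> j then of_real (2 ^ k * laguerre (j - k) (real k) (2 * real j * t)) else 0)"
proof -
  have "fps_X ^ k oo A = A ^ k"
    by (simp add: A_def fps_compose_power[symmetric] fps_X_fps_compose_startby0)
  then have "fps_nth (A ^ k * fps_deriv A * inverse (xi_phi t oo A)) j = fps_nth (fps_X ^ k * xi_phi t ^ j) j"
    using lagrange_buermann_nth[of "xi_phi t" "fps_X ^ k" j] by (simp add: A_def)
  then show ?thesis
    using xi_phi_power_nth[of "j - k" j t] by (simp add: fps_X_power_mult_nth)
qed

lemma lagrange_inverse_xi_phi_deriv:
  fixes t :: real
  defines "A \<equiv> lagrange_inverse (xi_phi t)"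
  shows "fps_deriv A * (2 + fps_const (of_real t) * A * (A + 2)) = (A + 2) * (xi_phi t oo A)"
proof -
  define E where "E = fps_exp (- of_real t) oo A"
  have A0: "fps_nth A 0 = 0"
    by (simp add: A_def)
  have "E \<noteq> 0"
    using A0 by (auto simp: E_def dest: arg_cong[of _ _ "\<lambda>F. fps_nth F 0"])
  have two: "(2 :: complex fps) = fps_const 2"
    by simp
  have \<phi>A: "xi_phi t oo A = (A + 2) * E"
    unfolding xi_phi_def E_def two
    by (simp add: fps_compose_mult_distrib fps_compose_add_distrib fps_X_fps_compose_startby0 A0 fps_const_compose)
  have "fps_deriv (xi_phi t) = fps_exp (- of_real t) - fps_const (of_real t) * xi_phi t"
    by (simp add: xi_phi_def algebra_simps flip: fps_const_neg)
  then have d\<phi>A: "fps_deriv (xi_phi t) oo A = E * (1 - fps_const (of_real t) * (A + 2))"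
    unfolding \<open>fps_deriv (xi_phi t) = _\<close>
    by (simp add: \<phi>A fps_compose_sub_distrib fps_compose_mult_distrib A0 fps_const_compose E_def algebra_simps)
  have "E * (fps_deriv A * (2 + fps_const (of_real t) * A * (A + 2))) = E * ((A + 2) * (xi_phi t oo A))"
    using lagrange_inverse_deriv[of "xi_phi t"] unfolding A_def[symmetric] \<phi>A d\<phi>A
    by (simp add: algebra_simps power2_eq_square)
  with \<open>E \<noteq> 0\<close> show ?thesis
    by simp
qed

section \<open>Evaluation inside the disc of convergence\<close>

lemma norm_less_fps_conv_radius:
  fixes F :: "complex fps"
  assumes "summable (\<lambda>n. norm (fps_nth F n) * s ^ n)" "norm z < s"
  shows "ereal (norm z) < fps_conv_radius F"
proof -
  have "0 \<le> s"
    using norm_ge_zero[of z] assms(2) by linarith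
  with assms(1) have "summable (\<lambda>n. norm (fps_nth F n * of_real s ^ n))"
    by (simp add: norm_mult norm_power)
  then have "summable (\<lambda>n. fps_nth F n * of_real s ^ n)"
    by (rule summable_norm_cancel)
  then have "ereal (norm (of_real s :: complex)) \<le> fps_conv_radius F"
    unfolding fps_conv_radius_def by (rule conv_radius_geI)
  then have "ereal s \<le> fps_conv_radius F"
    using \<open>0 \<le> s\<close> by simp
  moreover have "ereal (norm z) < ereal s"
    using assms(2) by simp
  ultimately show ?thesis
    by (rule order.strict_trans2[rotated])
qed

lemma fps_conv_radius_add_gt:
  "r < fps_conv_radius f \<Longrightarrow> r < fps_conv_radius g \<Longrightarrow> r < fps_conv_radius (f + g)"
  using fps_conv_radius_add[of f g] by (meson min_less_iff_conj order_less_le_trans)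

lemma fps_conv_radius_mult_gt:
  fixes f g :: "'a::{banach, real_normed_div_algebra, comm_ring_1} fps"
  shows "r < fps_conv_radius f \<Longrightarrow> r < fps_conv_radius g \<Longrightarrow> r < fps_conv_radius (f * g)"
  using fps_conv_radius_mult[of f g] by (meson min_less_iff_conj order_less_le_trans)

lemma fps_conv_radius_power_gt:
  fixes f :: "'a::{banach, real_normed_div_algebra, comm_ring_1} fps"
  shows "r < fps_conv_radius f \<Longrightarrow> r < fps_conv_radius (f ^ n)"
  using fps_conv_radius_power[of f n] by (meson order_less_le_trans)

lemma fps_conv_radius_xi_phi_series:
  fixes t :: real and y :: complex
  assumes "t \<ge> 0" "norm y < 1"
  defines "A \<equiv> lagrange_inverse (xi_phi t)" and "u \<equiv> of_real (exp (- t)) * y"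
  shows "ereal (norm u) < fps_conv_radius A"
    and "ereal (norm u) < fps_conv_radius (A ^ k * fps_deriv A * inverse (xi_phi t oo A))"
proof -
  define \<rho> where "\<rho> = (1 + norm y) / 2"
  define s where "s = exp (- t) * \<rho>"
  have \<rho>: "0 \<le> \<rho>" "\<rho> < 1" "norm y < \<rho>"
    using assms(2) by (simp_all add: \<rho>_def)
  have "norm u = exp (- t) * norm y"
    by (simp add: u_def norm_mult)
  also have "\<dots> < s"
    unfolding s_def using \<rho>(3) by (intro mult_strict_left_mono) simp_all
  finally have "norm u < s" .
  have "0 \<le> s"
    using \<rho>(1) by (simp add: s_def)
  have "summable (\<lambda>j. norm (fps_nth A j) * s ^ j)"
  proof (rule summable_comparison_test')
    show "summable (\<lambda>j. 2 * (\<bar>laguerre (j - 1) (real 1) (2 * real j * t)\<bar> * s ^ j))"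
      unfolding s_def by (rule summable_mult, rule summable_abs_laguerre) (use assms(1) \<rho>(1,2) in auto)
  next
    fix j :: nat assume "j \<ge> 1"
    then obtain n where j: "j = Suc n"
      by (cases j) simp_all
    have "norm (fps_nth A j) = 2 / real j * \<bar>laguerre (j - 1) 1 (2 * real j * t)\<bar>"
      by (simp only: A_def j lagrange_inverse_xi_phi_nth norm_of_real) (simp add: abs_mult)
    also have "\<dots> \<le> 2 * \<bar>laguerre (j - 1) 1 (2 * real j * t)\<bar>"
      using j by (intro mult_right_mono) (auto simp: field_simps)
    finally have "norm (fps_nth A j) \<le> 2 * \<bar>laguerre (j - 1) 1 (2 * real j * t)\<bar>" .
    from mult_right_mono[OF this zero_le_power[OF \<open>0 \<le> s\<close>]]
    show "norm (norm (fps_nth A j) * s ^ j) \<le> 2 * (\<bar>laguerre (j - 1) (real 1) (2 * real j * t)\<bar> * s ^ j)"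
      using \<open>0 \<le> s\<close> by (simp add: mult.assoc)
  qed
  then show "ereal (norm u) < fps_conv_radius A"
    using \<open>norm u < s\<close> by (rule norm_less_fps_conv_radius)
  have "summable (\<lambda>j. norm (fps_nth (A ^ k * fps_deriv A * inverse (xi_phi t oo A)) j) * s ^ j)"
  proof (rule summable_comparison_test')
    show "summable (\<lambda>j. 2 ^ k * (\<bar>laguerre (j - k) (real k) (2 * real j * t)\<bar> * s ^ j))"
      unfolding s_def by (rule summable_mult, rule summable_abs_laguerre) (use assms(1) \<rho>(1,2) in auto)
  next
    fix j :: nat assume "j \<ge> k"
    then show "norm (norm (fps_nth (A ^ k * fps_deriv A * inverse (xi_phi t oo A)) j) * s ^ j) \<le>
        2 ^ k * (\<bar>laguerre (j - k) (real k) (2 * real j * t)\<bar> * s ^ j)"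
      using \<open>0 \<le> s\<close> by (simp add: A_def lagrange_buermann_xi_phi_nth norm_mult norm_power)
  qed
  then show "ereal (norm u) < fps_conv_radius (A ^ k * fps_deriv A * inverse (xi_phi t oo A))"
    using \<open>norm u < s\<close> by (rule norm_less_fps_conv_radius)
qed

lemma K2t_eq_eval_lagrange_inverse:
  assumes "t \<ge> 0" "norm y < 1"
  shows "K2t t y = 1 + eval_fps (lagrange_inverse (xi_phi t)) (of_real (exp (- t)) * y)"
proof -
  define A where "A = lagrange_inverse (xi_phi t)"
  define u where "u = of_real (exp (- t)) * y"
  define h where "h = (\<lambda>n. if n = 0 then 0 else
       of_real (1 / real n * exp (- real n * t) * laguerre (n - 1) 1 (2 * real n * t)) * y ^ n)"
  have "fps_nth A n * u ^ n = 2 * h n" for n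
  proof (cases n)
    case Suc
    have "of_real (exp (- t)) ^ n = complex_of_real (exp (- real n * t))"
      using exp_of_nat_mult[of n "- t"] by simp
    then show ?thesis
      by (simp add: Suc A_def u_def h_def lagrange_inverse_xi_phi_nth power_mult_distrib)
  qed (simp add: A_def h_def)
  moreover have "(\<lambda>n. fps_nth A n * u ^ n) sums eval_fps A u"
    using fps_conv_radius_xi_phi_series(1)[OF assms] unfolding A_def u_def by (rule sums_eval_fps)
  ultimately have "h sums (eval_fps A u / 2)"
    using sums_divide[of _ _ 2] by fastforce
  then show ?thesis
    unfolding K2t_def h_def[symmetric] A_def u_def by (simp add: sums_iff mult.commute)
qed

lemma sums_laguerre_series:
  fixes t :: real and y :: complex
  assumes "t \<ge> 0" "norm y < 1"
  defines "A \<equiv> lagrange_inverse (xi_phi t)" and "u \<equiv> of_real (exp (- t)) * y"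
  shows "(\<lambda>j. if k \<le> j then of_real (laguerre (j - k) (real k) (2 * real j * t)) * u ^ j else 0)
    sums (eval_fps (A ^ k * fps_deriv A * inverse (xi_phi t oo A)) u / 2 ^ k)"
proof -
  define B where "B = A ^ k * fps_deriv A * inverse (xi_phi t oo A)"
  have "(\<lambda>j. fps_nth B j * u ^ j) sums eval_fps B u"
    using fps_conv_radius_xi_phi_series(2)[OF assms(1,2)] unfolding B_def A_def u_def
    by (rule sums_eval_fps)
  moreover have "fps_nth B j * u ^ j =
      2 ^ k * (if k \<le> j then of_real (laguerre (j - k) (real k) (2 * real j * t)) * u ^ j else 0)" for j
    by (simp add: B_def A_def lagrange_buermann_xi_phi_nth)
  ultimately show ?thesis
    using sums_divide[of _ _ "2 ^ k"] by (fastforce simp: B_def)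
qed

lemma eval_xi_phi_identity:
  fixes t :: real and y :: complex
  assumes "t \<ge> 0" "norm y < 1"
  defines "A \<equiv> lagrange_inverse (xi_phi t)" and "u \<equiv> of_real (exp (- t)) * y"
  defines "e \<equiv> eval_fps A u"
  shows "eval_fps (A ^ k * fps_deriv A * inverse (xi_phi t oo A)) u * (2 + of_real t * e * (e + 2)) =
    e ^ k * (e + 2)"
proof -
  define B where "B = A ^ k * fps_deriv A * inverse (xi_phi t oo A)"
  define c where "c = fps_const (complex_of_real t)"
  have deriv: "fps_deriv A * (2 + c * A * (A + 2)) = (A + 2) * (xi_phi t oo A)"
    unfolding A_def c_def by (rule lagrange_inverse_xi_phi_deriv)
  have "B * (2 + c * A * (A + 2)) = A ^ k * (fps_deriv A * (2 + c * A * (A + 2))) * inverse (xi_phi t oo A)"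
    by (simp add: B_def mult_ac)
  also have "\<dots> = A ^ k * (A + 2) * ((xi_phi t oo A) * inverse (xi_phi t oo A))"
    unfolding deriv by (simp add: mult_ac)
  also have "(xi_phi t oo A) * inverse (xi_phi t oo A) = 1"
    by (simp add: A_def inverse_mult_eq_1')
  finally have formal: "B * (2 + c * A * (A + 2)) = A ^ k * (A + 2)"
    by simp
  have rA: "ereal (norm u) < fps_conv_radius A" and rB: "ereal (norm u) < fps_conv_radius B"
    using fps_conv_radius_xi_phi_series[OF assms(1,2)] by (simp_all add: A_def B_def u_def)
  have r2: "ereal (norm u) < fps_conv_radius (2 :: complex fps)" and rc: "ereal (norm u) < fps_conv_radius c"
    by (simp_all add: c_def)
  have rA2: "ereal (norm u) < fps_conv_radius (A + 2)"
    using rA r2 by (rule fps_conv_radius_add_gt)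
  have rcA: "ereal (norm u) < fps_conv_radius (c * A)"
    using rc rA by (rule fps_conv_radius_mult_gt)
  have rD: "ereal (norm u) < fps_conv_radius (c * A * (A + 2))"
    using rcA rA2 by (rule fps_conv_radius_mult_gt)
  have "eval_fps B u * (2 + of_real t * e * (e + 2)) = eval_fps (B * (2 + c * A * (A + 2))) u"
    using rA rB r2 rc rA2 rcA rD fps_conv_radius_add_gt[OF r2 rD]
    by (simp add: eval_fps_mult eval_fps_add e_def c_def)
  also have "\<dots> = eval_fps (A ^ k * (A + 2)) u"
    unfolding formal ..
  also have "\<dots> = e ^ k * (e + 2)"
    using rA rA2 fps_conv_radius_power_gt[OF rA]
    by (simp add: eval_fps_mult eval_fps_add eval_fps_power e_def)
  finally show ?thesis
    unfolding B_def .
qed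

lemma cleared_identity_imp_K_ratio:
  fixes b e :: complex and t :: real
  assumes "b * (2 + of_real t * e * (e + 2)) = e ^ (m + 1) * (e + 2)"
  shows "b = ((1 + e)\<^sup>2 - 1) / (of_real t * (1 + e)\<^sup>2 + of_real (2 - t)) * (1 + e - 1) ^ m"
proof -
  have "2 + of_real t * e * (e + 2) \<noteq> 0"
  proof
    assume "2 + of_real t * e * (e + 2) = 0"
    with assms have "e = 0 \<or> e + 2 = 0"
      by auto
    with \<open>2 + of_real t * e * (e + 2) = 0\<close> show False
      by auto
  qed
  moreover have "(1 + e)\<^sup>2 - 1 = e * (e + 2)" "of_real t * (1 + e)\<^sup>2 + of_real (2 - t) = 2 + of_real t * e * (e + 2)"
    by (simp_all add: algebra_simps power2_eq_square)
  ultimately show ?thesis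
    using assms by (simp add: field_simps)
qed

theorem mainTheorem6:
  fixes t :: real and m :: nat and y :: complex
  assumes "t > 0" and "m \<ge> 1" and "norm y < 1"
  shows "summable (\<lambda>j. if m + 1 \<le> j then
             of_real (laguerre (j - m - 1) (real (m + 1)) (2 * real j * t)) * (of_real (exp (- t)) * y) ^ j
           else 0)
    \<and> 2 ^ (m + 1) * (\<Sum>j. if m + 1 \<le> j then
             of_real (laguerre (j - m - 1) (real (m + 1)) (2 * real j * t)) * (of_real (exp (- t)) * y) ^ j
           else 0)
      = ((K2t t y)\<^sup>2 - 1) / (of_real t * (K2t t y)\<^sup>2 + of_real (2 - t)) * (K2t t y - 1) ^ m"
proof -
  define A where "A = lagrange_inverse (xi_phi t)"
  define u where "u = of_real (exp (- t)) * y"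
  have "t \<ge> 0"
    using assms(1) by simp
  have "(\<lambda>j. if m + 1 \<le> j then
             of_real (laguerre (j - m - 1) (real (m + 1)) (2 * real j * t)) * (of_real (exp (- t)) * y) ^ j
           else 0) sums (eval_fps (A ^ (m + 1) * fps_deriv A * inverse (xi_phi t oo A)) u / 2 ^ (m + 1))"
    using sums_laguerre_series[OF \<open>t \<ge> 0\<close> assms(3), of "m + 1"]
    by (simp only: A_def u_def diff_diff_left)
  moreover have "K2t t y = 1 + eval_fps A u"
    unfolding A_def u_def by (rule K2t_eq_eval_lagrange_inverse[OF \<open>t \<ge> 0\<close> assms(3)])
  moreover note cleared_identity_imp_K_ratio[OF eval_xi_phi_identity[OF \<open>t \<ge> 0\<close> assms(3), of "m + 1"]]
  ultimately show ?thesis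
    by (auto simp: sums_iff A_def u_def)
qed

end
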